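(* Assume $f$ satisfies (A1). Let $x_0\in X$, $\hat y\in Y$, and run Algorithm 1 with step size $\gamma_x=1/\lambda$ and a number of iterations $$T\ge\frac{300\lambda[\varphi(x_0)-\psi(\hat y)]}{\varepsilon^2},$$ where $\psi(y)=\min_{x\in X}f(x,y)$. Then its output $x^*$ satisfies $\|\nabla\hat\varphi_{2\lambda}(x^* )\|\le\varepsilon/6$, where $\hat\varphi(x)=f(x,\hat y)$. Moreover, $\|\nabla\varphi_{2\lambda}(x^* )\|\le\varepsilon$ provided $24\mu\mathsf D\le\varepsilon$.
   Context: Let $E_x,E_y$ be finite-dimensional Euclidean spaces with Euclidean norms $\|\cdot\|$. Let $X\subseteq E_x$, $Y\subseteq E_y$ be convex sets with nonempty interior, $Y$ compact, and $\mathsf D\ge\mathrm{diam}(Y)$. Let $f:X\times Y\to\mathbb R$ and $\varphi(x)=\max_{y\in Y}f(x,y)$. (A1): $\nabla_x f$ exists on $X\times Y$ and $\|\nabla_x f(x',y')-\nabla_x f(x,y)\|\le\lambda\|x'-x\|+\mu\|y'-y\|$ for all $x,x'\in X,y,y'\in Y$, with $\lambda>0,\mu\ge0$. For a $\lambda'$-weakly convex function $\phi:X\to\mathbb R$ (i.e. $\phi+\frac{\lambda'}2\|\cdot\|^2$ convex) and $\bar\lambda>\lambda'$, the Moreau envelope is $\phi_{\bar\lambda}(x)=\min_{u\in X}\{\phi(u)+\frac{\bar\lambda}{2}\|u-x\|^2\}$; $\Pi_X$ denotes Euclidean projection onto $X$. Algorithm 1 (input $x_0\in X$, $\hat y\in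 Y$, $\gamma_x>0$, $T\in\mathbb N$): set $x^*=x_0$, $\varepsilon^*=+\infty$. For $t=0,\dots,T-1$: set $\tilde x_{t+1}=x_t-\gamma_x\nabla_x f(x_t,\hat y)$, $x_{t+1}=\Pi_X[\tilde x_{t+1}]$, $\varepsilon_t^2=\|\nabla_x f(x_t,\hat y)\|^2-\frac1{\gamma_x^2}\|\tilde x_{t+1}-x_{t+1}\|^2$; if $\varepsilon_t<\varepsilon^*$, set $x^*=x_t$, $\varepsilon^*=\varepsilon_t$. Output $x^*$. *)

theory Defs
  imports "HOL-Analysis.Analysis"
begin

definition moreau_env :: "('a::real_normed_vector \<Rightarrow> real) \<Rightarrow> 'a set \<Rightarrow> real \<Rightarrow> 'a \<Rightarrow> real" where
  "moreau_env phi X lam x = (INF u\<in>X. phi u + lam / 2 * (norm (u - x))\<^sup>2)"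

text \<open>Algorithm 1. gx x y is the partial gradient of f in x; proj = Euclidean projection onto X.\<close>
fun alg1_x :: "('a::euclidean_space \<Rightarrow> 'b \<Rightarrow> 'a) \<Rightarrow> 'a set \<Rightarrow> real \<Rightarrow> 'a \<Rightarrow> 'b \<Rightarrow> nat \<Rightarrow> 'a" where
  "alg1_x gx X gam x0 yh 0 = x0"
| "alg1_x gx X gam x0 yh (Suc t) =
     closest_point X (alg1_x gx X gam x0 yh t - gam *\<^sub>R gx (alg1_x gx X gam x0 yh t) yh)"

definition alg1_xt :: "('a::euclidean_space \<Rightarrow> 'b \<Rightarrow> 'a) \<Rightarrow> 'a set \<Rightarrow> real \<Rightarrow> 'a \<Rightarrow> 'b \<Rightarrow> nat \<Rightarrow> 'a" where
  "alg1_xt gx X gam x0 yh t = alg1_x gx X gam x0 yh t - gam *\<^sub>R gx (alg1_x gx X gam x0 yh t) yh"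

definition alg1_eps_sq :: "('a::euclidean_space \<Rightarrow> 'b \<Rightarrow> 'a) \<Rightarrow> 'a set \<Rightarrow> real \<Rightarrow> 'a \<Rightarrow> 'b \<Rightarrow> nat \<Rightarrow> real" where
  "alg1_eps_sq gx X gam x0 yh t =
     (norm (gx (alg1_x gx X gam x0 yh t) yh))\<^sup>2
     - (1 / gam\<^sup>2) * (norm (alg1_xt gx X gam x0 yh t - alg1_x gx X gam x0 yh (Suc t)))\<^sup>2"

text \<open>State (x*, eps*) after the loop body has been executed for t = 0, ..., n-1.\<close>
fun alg1_state :: "('a::euclidean_space \<Rightarrow> 'b \<Rightarrow> 'a) \<Rightarrow> 'a set \<Rightarrow> real \<Rightarrow> 'a \<Rightarrow> 'b \<Rightarrow> nat \<Rightarrow> 'a \<times> ereal" where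
  "alg1_state gx X gam x0 yh 0 = (x0, \<infinity>)"
| "alg1_state gx X gam x0 yh (Suc t) =
     (let (xs, es) = alg1_state gx X gam x0 yh t;
          e = sqrt (alg1_eps_sq gx X gam x0 yh t)
      in if ereal e < es then (alg1_x gx X gam x0 yh t, ereal e) else (xs, es))"

definition alg1_output :: "('a::euclidean_space \<Rightarrow> 'b \<Rightarrow> 'a) \<Rightarrow> 'a set \<Rightarrow> real \<Rightarrow> 'a \<Rightarrow> 'b \<Rightarrow> nat \<Rightarrow> 'a" where
  "alg1_output gx X gam x0 yh T = fst (alg1_state gx X gam x0 yh T)"

end

theory Submission
  imports Defs "HOL-Real_Asymp.Real_Asymp"
begin

(*
  Projected gradient descent with step 1/lam on the slice f(., yh) decreases it by eps_t^2/(2 lam)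
  per step, so the iterate z with the least eps_t satisfies f(z, yh) - delta <= f(u, yh) + lam |u - z|^2
  on X, where T delta <= phi(x0) - psi(yh). The slice and phi = max_y f(., y) are lam-weakly convex,
  so their Moreau envelopes with parameter 2 lam are differentiable at z with gradient
  g = 2 lam (z - q), q the proximal point of z. Quadratic growth of the proximal objective around q,
  evaluated at z, together with the delta-stationarity of z and a bound L |u - z| on the variation
  of F - f(., yh), gives |g|^2 <= 8 lam delta + 4 L |g|. Here L = 0 for the slice and L = mu diam Y
  for phi, because the gradient of f depends mu-Lipschitzly on y.
*)

lemma power2_norm_diff:
  fixes a b :: "'a::real_inner"
  shows "(norm (a - b))\<^sup>2 = (norm a)\<^sup>2 - 2 * (a \<bullet> b) + (norm b)\<^sup>2"
  using dot_norm_neg[of a b] by simp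

lemma power2_norm_add:
  fixes a b :: "'a::real_inner"
  shows "(norm (a + b))\<^sup>2 = (norm a)\<^sup>2 + 2 * (a \<bullet> b) + (norm b)\<^sup>2"
  using dot_norm[of a b] by simp

lemma power2_norm_convex_combination:
  fixes a b x :: "'a::real_inner"
  shows "(norm ((1 - s) *\<^sub>R a + s *\<^sub>R b - x))\<^sup>2
    = (1 - s) * (norm (a - x))\<^sup>2 + s * (norm (b - x))\<^sup>2 - s * (1 - s) * (norm (a - b))\<^sup>2"
proof -
  have "(1 - s) *\<^sub>R a + s *\<^sub>R b - x = (1 - s) *\<^sub>R (a - x) + s *\<^sub>R (b - x)"
    by (simp add: algebra_simps)
  moreover have "a - b = (a - x) - (b - x)" by simp
  ultimately show ?thesis
    unfolding power2_norm_eq_inner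
    by (simp only:) (simp add: inner_commute algebra_simps)
qed

lemma has_derivative_along_segment:
  fixes G :: "'a::real_inner \<Rightarrow> real"
  assumes X: "convex X" and x: "x \<in> X" and u: "u \<in> X"
    and der: "\<And>z. z \<in> X \<Longrightarrow> (G has_derivative (\<lambda>h. dG z \<bullet> h)) (at z within X)"
    and t: "t \<in> {0..1}"
  shows "((\<lambda>t. G (x + t *\<^sub>R (u - x))) has_derivative (\<lambda>s. s * (dG (x + t *\<^sub>R (u - x)) \<bullet> (u - x))))
           (at t within {0..1})"
proof -
  have "x + s *\<^sub>R (u - x) \<in> X" if "s \<in> {0..1}" for s
  proof -
    have "x + s *\<^sub>R (u - x) = (1 - s) *\<^sub>R x + s *\<^sub>R u" by (simp add: algebra_simps)
    then show ?thesis using X x u that by (auto intro: convexD_alt)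
  qed
  then have "(\<lambda>s. x + s *\<^sub>R (u - x)) ` {0..1} \<subseteq> X" by auto
  moreover have "((\<lambda>s. x + s *\<^sub>R (u - x)) has_derivative (\<lambda>s. s *\<^sub>R (u - x))) (at t within {0..1})"
    by (auto intro!: derivative_eq_intros)
  ultimately have "((\<lambda>s. G (x + s *\<^sub>R (u - x))) has_derivative
      (\<lambda>s. dG (x + t *\<^sub>R (u - x)) \<bullet> (s *\<^sub>R (u - x)))) (at t within {0..1})"
    using has_derivative_in_compose2[OF der _ t] by blast
  then show ?thesis by (simp add: mult.commute)
qed

lemma quadratic_bounds_of_lipschitz_gradient:
  fixes G :: "'a::real_inner \<Rightarrow> real"
  assumes X: "convex X" and x: "x \<in> X" and u: "u \<in> X"
    and der: "\<And>z. z \<in> X \<Longrightarrow> (G has_derivative (\<lambda>h. dG z \<bullet> h)) (at z within X)"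
    and lip: "\<And>a b. a \<in> X \<Longrightarrow> b \<in> X \<Longrightarrow> norm (dG b - dG a) \<le> lam * norm (b - a)"
  shows "\<bar>G u - G x - dG x \<bullet> (u - x)\<bar> \<le> lam / 2 * (norm (u - x))\<^sup>2"
proof -
  define p where "p t = x + t *\<^sub>R (u - x)" for t
  define \<phi> where "\<phi> t = G (p t) - t * (dG x \<bullet> (u - x))" for t
  define \<phi>' where "\<phi>' t = (dG (p t) - dG x) \<bullet> (u - x)" for t
  have d\<phi>: "(\<phi> has_derivative (\<lambda>s. s * \<phi>' t)) (at t within {0..1})" if "t \<in> {0..1}" for t
    using has_derivative_along_segment[OF X x u der that] unfolding \<phi>_def \<phi>'_def p_def
    by (auto intro!: derivative_eq_intros simp: inner_diff_left algebra_simps)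
  have vd\<phi>: "(\<phi> has_vector_derivative \<phi>' t) (at t)" if "t \<in> {0<..<1}" for t
  proof -
    have "(\<phi> has_derivative (\<lambda>s. s * \<phi>' t)) (at t within {0<..<1})"
      using d\<phi>[of t] that by (auto intro: has_derivative_subset)
    then show ?thesis
      using that by (simp add: has_vector_derivative_def at_within_open[OF _ open_greaterThanLessThan])
  qed
  have bnd: "\<bar>\<phi>' t\<bar> \<le> lam * t * (norm (u - x))\<^sup>2" if "t \<in> {0..1}" for t
  proof -
    have "\<bar>\<phi>' t\<bar> \<le> norm (dG (p t) - dG x) * norm (u - x)"
      unfolding \<phi>'_def by (rule Cauchy_Schwarz_ineq2)
    also have "\<dots> \<le> lam * norm (p t - x) * norm (u - x)"
    proof (rule mult_right_mono[OF lip[OF x]])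
      have "p t = (1 - t) *\<^sub>R x + t *\<^sub>R u" by (simp add: p_def algebra_simps)
      then show "p t \<in> X" using X x u that by (auto intro: convexD_alt)
    qed simp
    also have "norm (p t - x) = t * norm (u - x)" using that by (simp add: p_def)
    finally show ?thesis by (simp add: power2_eq_square mult.assoc)
  qed
  define \<psi> where "\<psi> t = lam / 2 * t\<^sup>2 * (norm (u - x))\<^sup>2" for t
  have vd\<psi>: "(\<psi> has_vector_derivative lam * t * (norm (u - x))\<^sup>2) (at t)" for t
    unfolding \<psi>_def has_real_derivative_iff_has_vector_derivative[symmetric]
    by (auto intro!: derivative_eq_intros)
  have "norm (\<phi> 1 - \<phi> 0) \<le> \<psi> 1 - \<psi> 0"
  proof (rule differentiable_bound_general[OF zero_less_one])
    show "continuous_on {0..1} \<phi>" using d\<phi> by (rule has_derivative_continuous_on)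
    show "continuous_on {0..1} \<psi>" unfolding \<psi>_def by (intro continuous_intros)
  qed (use vd\<phi> vd\<psi> bnd in auto)
  then show ?thesis by (simp add: \<phi>_def \<psi>_def p_def algebra_simps)
qed

lemma continuous_on_closed_attains_inf_coercive:
  fixes H :: "'a::heine_borel \<Rightarrow> real"
  assumes X: "closed X" and x0: "x0 \<in> X" and cont: "continuous_on X H"
    and low: "\<And>u. u \<in> X \<Longrightarrow> g (dist u x0) \<le> H u"
    and coercive: "\<forall>\<^sub>F d in at_top. H x0 < g d"
  obtains q where "q \<in> X" "\<And>u. u \<in> X \<Longrightarrow> H q \<le> H u"
proof -
  obtain R where R: "\<And>d. d \<ge> R \<Longrightarrow> H x0 < g d"
    using coercive by (auto simp: eventually_at_top_linorder)
  define S where "S = X \<inter> cball x0 \<bar>R\<bar>"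
  have "compact S" unfolding S_def using X by (intro closed_Int_compact) auto
  moreover have "x0 \<in> S" using x0 by (simp add: S_def)
  moreover have "continuous_on S H" unfolding S_def by (rule continuous_on_subset[OF cont]) auto
  ultimately obtain q where q: "q \<in> S" and qmin: "\<And>v. v \<in> S \<Longrightarrow> H q \<le> H v"
    using continuous_attains_inf[of S H] by blast
  have "H q \<le> H u" if u: "u \<in> X" for u
  proof (cases "u \<in> S")
    case False
    then have "R \<le> dist u x0" using u by (simp add: S_def dist_commute)
    then have "H x0 < H u" using R low[OF u] by fastforce
    then show ?thesis using qmin[OF \<open>x0 \<in> S\<close>] by simp
  qed (rule qmin)
  moreover have "q \<in> X" using q by (simp add: S_def)
  ultimately show ?thesis using that by blast
qed

lemma has_gderiv_of_quadratic_remainder: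
  fixes g :: "'a::real_inner \<Rightarrow> real"
  assumes rem: "\<And>y. \<bar>g y - g x - (y - x) \<bullet> d\<bar> \<le> C * (norm (y - x))\<^sup>2"
  shows "GDERIV g x :> d"
  unfolding gderiv_def has_derivative_at_alt
proof (intro conjI allI impI bounded_linear_inner_left)
  fix e :: real assume e: "e > 0"
  show "\<exists>r>0. \<forall>y. norm (y - x) < r \<longrightarrow> norm (g y - g x - (y - x) \<bullet> d) \<le> e * norm (y - x)"
  proof (intro exI[of _ "e / (\<bar>C\<bar> + 1)"] conjI allI impI)
    show "e / (\<bar>C\<bar> + 1) > 0" using e by simp
    fix y assume y: "norm (y - x) < e / (\<bar>C\<bar> + 1)"
    have "C * (norm (y - x))\<^sup>2 \<le> (\<bar>C\<bar> + 1) * norm (y - x) * norm (y - x)"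
      using mult_right_mono[of C "\<bar>C\<bar> + 1" "norm (y - x) * norm (y - x)"]
      by (simp add: power2_eq_square mult.assoc)
    also have "\<dots> \<le> e * norm (y - x)"
      using y by (intro mult_right_mono) (auto simp: field_simps)
    finally show "norm (g y - g x - (y - x) \<bullet> d) \<le> e * norm (y - x)"
      using rem[of y] by simp
  qed
qed

definition weakly_convex_on :: "real \<Rightarrow> 'a::real_inner set \<Rightarrow> ('a \<Rightarrow> real) \<Rightarrow> bool" where
  "weakly_convex_on rho X F \<longleftrightarrow> convex_on X (\<lambda>x. F x + rho / 2 * (norm x)\<^sup>2)"

lemma weakly_convex_on_iff:
  "weakly_convex_on rho X F \<longleftrightarrow> convex X \<and>
    (\<forall>a\<in>X. \<forall>b\<in>X. \<forall>s. 0 \<le> s \<and> s \<le> 1 \<longrightarrow>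
      F ((1 - s) *\<^sub>R a + s *\<^sub>R b) \<le> (1 - s) * F a + s * F b + rho / 2 * s * (1 - s) * (norm (a - b))\<^sup>2)"
proof -
  have shift: "F z + rho / 2 * (norm z)\<^sup>2 \<le> (1 - s) * (F a + rho / 2 * (norm a)\<^sup>2) + s * (F b + rho / 2 * (norm b)\<^sup>2)
      \<longleftrightarrow> F z \<le> (1 - s) * F a + s * F b + rho / 2 * s * (1 - s) * (norm (a - b))\<^sup>2"
    if "z = (1 - s) *\<^sub>R a + s *\<^sub>R b" for z a b :: 'a and s
  proof -
    have N: "(norm z)\<^sup>2 = (1 - s) * (norm a)\<^sup>2 + s * (norm b)\<^sup>2 - s * (1 - s) * (norm (a - b))\<^sup>2"
      using power2_norm_convex_combination[of s a b 0] that by simp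
    show ?thesis unfolding N by (simp add: algebra_simps) argo
  qed
  show ?thesis
  proof (intro iffI conjI ballI allI impI)
    assume "weakly_convex_on rho X F"
    then have G: "convex_on X (\<lambda>x. F x + rho / 2 * (norm x)\<^sup>2)" by (simp add: weakly_convex_on_def)
    then show "convex X" by (rule convex_on_imp_convex)
    fix a b and s :: real assume "a \<in> X" "b \<in> X" "0 \<le> s \<and> s \<le> 1"
    then show "F ((1 - s) *\<^sub>R a + s *\<^sub>R b) \<le> (1 - s) * F a + s * F b + rho / 2 * s * (1 - s) * (norm (a - b))\<^sup>2"
      using convex_onD[OF G, of s a b] shift[OF refl, of s a b] by blast
  next
    assume "convex X \<and> (\<forall>a\<in>X. \<forall>b\<in>X. \<forall>s. 0 \<le> s \<and> s \<le> 1 \<longrightarrow>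
      F ((1 - s) *\<^sub>R a + s *\<^sub>R b) \<le> (1 - s) * F a + s * F b + rho / 2 * s * (1 - s) * (norm (a - b))\<^sup>2)"
    then show "weakly_convex_on rho X F"
      unfolding weakly_convex_on_def by (intro convex_onI) (use shift in auto)
  qed
qed

lemma weakly_convex_on_lower_quadratic_model:
  fixes G :: "'a::real_inner \<Rightarrow> real"
  assumes X: "convex X"
    and low: "\<And>z u. z \<in> X \<Longrightarrow> u \<in> X \<Longrightarrow> G z + dG z \<bullet> (u - z) - rho / 2 * (norm (u - z))\<^sup>2 \<le> G u"
  shows "weakly_convex_on rho X G"
  unfolding weakly_convex_on_iff
proof (intro conjI X ballI allI impI)
  fix a b and s :: real assume a: "a \<in> X" and b: "b \<in> X" and s: "0 \<le> s \<and> s \<le> 1"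
  define z where "z = (1 - s) *\<^sub>R a + s *\<^sub>R b"
  have z: "z \<in> X" using X a b s unfolding z_def by (auto intro: convexD_alt)
  define c where "c = dG z \<bullet> (a - b)"
  define N where "N = (norm (a - b))\<^sup>2"
  have "a - z = s *\<^sub>R (a - b)" "b - z = (s - 1) *\<^sub>R (a - b)" by (simp_all add: z_def algebra_simps)
  then have la: "G z + s * c - rho / 2 * (s\<^sup>2 * N) \<le> G a"
    and lb: "G z + (s - 1) * c - rho / 2 * ((s - 1)\<^sup>2 * N) \<le> G b"
    using low[OF z a] low[OF z b] by (simp_all add: c_def N_def power_mult_distrib)
  have "(1 - s) * (G z + s * c - rho / 2 * (s\<^sup>2 * N)) + s * (G z + (s - 1) * c - rho / 2 * ((s - 1)\<^sup>2 * N))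
      = G z - rho / 2 * s * (1 - s) * N"
    by (simp add: field_simps power2_eq_square)
  moreover have "(1 - s) * (G z + s * c - rho / 2 * (s\<^sup>2 * N)) \<le> (1 - s) * G a"
    using la s by (intro mult_left_mono) auto
  moreover have "s * (G z + (s - 1) * c - rho / 2 * ((s - 1)\<^sup>2 * N)) \<le> s * G b"
    using lb s by (intro mult_left_mono) auto
  ultimately show "G ((1 - s) *\<^sub>R a + s *\<^sub>R b) \<le> (1 - s) * G a + s * G b + rho / 2 * s * (1 - s) * (norm (a - b))\<^sup>2"
    unfolding z_def[symmetric] N_def[symmetric] by linarith
qed

lemma weakly_convex_on_SUP:
  assumes X: "convex X"
    and wc: "\<And>y. y \<in> Y \<Longrightarrow> weakly_convex_on rho X (\<lambda>x. f x y)"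
    and max: "\<And>x. x \<in> X \<Longrightarrow> \<exists>y\<in>Y. \<forall>y'\<in>Y. f x y' \<le> f x y"
  shows "weakly_convex_on rho X (\<lambda>x. SUP y\<in>Y. f x y)"
  unfolding weakly_convex_on_iff
proof (intro conjI X ballI allI impI)
  have le_SUP: "f x y \<le> (SUP y\<in>Y. f x y)" if x: "x \<in> X" and y: "y \<in> Y" for x y
  proof -
    obtain y0 where "\<forall>y'\<in>Y. f x y' \<le> f x y0" using max[OF x] by blast
    then have "bdd_above (f x ` Y)" by (auto intro: bdd_aboveI2)
    then show ?thesis by (rule cSUP_upper[OF y])
  qed
  fix a b and s :: real assume a: "a \<in> X" and b: "b \<in> X" and s: "0 \<le> s \<and> s \<le> 1"
  define z where "z = (1 - s) *\<^sub>R a + s *\<^sub>R b"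
  have "z \<in> X" using X a b s unfolding z_def by (auto intro: convexD_alt)
  then obtain y where y: "y \<in> Y" and ymax: "\<forall>y'\<in>Y. f z y' \<le> f z y" using max by blast
  have "(SUP y\<in>Y. f z y) = f z y"
    using y ymax by (intro cSup_eq_maximum) auto
  also have "\<dots> \<le> (1 - s) * f a y + s * f b y + rho / 2 * s * (1 - s) * (norm (a - b))\<^sup>2"
    using wc[OF y] a b s unfolding weakly_convex_on_iff z_def by blast
  also have "\<dots> \<le> (1 - s) * (SUP y\<in>Y. f a y) + s * (SUP y\<in>Y. f b y) + rho / 2 * s * (1 - s) * (norm (a - b))\<^sup>2"
    using s le_SUP[OF a y] le_SUP[OF b y] by (intro add_mono mult_left_mono order_refl) auto
  finally show "(SUP y\<in>Y. f ((1 - s) *\<^sub>R a + s *\<^sub>R b) y)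
      \<le> (1 - s) * (SUP y\<in>Y. f a y) + s * (SUP y\<in>Y. f b y) + rho / 2 * s * (1 - s) * (norm (a - b))\<^sup>2"
    unfolding z_def .
qed

definition is_prox :: "('a::real_normed_vector \<Rightarrow> real) \<Rightarrow> 'a set \<Rightarrow> real \<Rightarrow> 'a \<Rightarrow> 'a \<Rightarrow> bool" where
  "is_prox F X r x q \<longleftrightarrow> q \<in> X \<and> (\<forall>u\<in>X. F q + r / 2 * (norm (q - x))\<^sup>2 \<le> F u + r / 2 * (norm (u - x))\<^sup>2)"

lemma moreau_env_eq_prox:
  assumes "is_prox F X r x q"
  shows "moreau_env F X r x = F q + r / 2 * (norm (q - x))\<^sup>2"
  using assms unfolding moreau_env_def is_prox_def by (intro cInf_eq_minimum) auto

lemma prox_quadratic_growth: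
  assumes wc: "weakly_convex_on rho X F" and r: "rho < r"
    and q: "is_prox F X r x q" and u: "u \<in> X"
  shows "F q + r / 2 * (norm (q - x))\<^sup>2 + (r - rho) / 2 * (norm (u - q))\<^sup>2 \<le> F u + r / 2 * (norm (u - x))\<^sup>2"
proof -
  define H where "H v = F v + r / 2 * (norm (v - x))\<^sup>2" for v
  define A where "A = (norm (u - q))\<^sup>2"
  have qX: "q \<in> X" and qmin: "\<And>v. v \<in> X \<Longrightarrow> H q \<le> H v"
    using q unfolding is_prox_def H_def by auto
  have X: "convex X" using wc by (simp add: weakly_convex_on_iff)
  (* H is (r - rho)-strongly convex: compare H q with H on the segment from q to u, near q. *)
  have "t * ((r - rho) / 2 * A) \<le> H u - H q" if t: "0 < t" "t < 1" for t
  proof -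
    define s where "s = 1 - t"
    define w where "w = (1 - s) *\<^sub>R q + s *\<^sub>R u"
    have s: "0 < s" "s \<le> 1" using t by (auto simp: s_def)
    have "w \<in> X" using X qX u s unfolding w_def by (auto intro: convexD_alt)
    have Fw: "F w \<le> (1 - s) * F q + s * F u + rho / 2 * s * (1 - s) * A"
      using wc qX u s unfolding weakly_convex_on_iff w_def A_def by (auto simp: norm_minus_commute)
    have Nw: "(norm (w - x))\<^sup>2 = (1 - s) * (norm (q - x))\<^sup>2 + s * (norm (u - x))\<^sup>2 - s * (1 - s) * A"
      using power2_norm_convex_combination[of s q u x] by (simp add: w_def A_def norm_minus_commute)
    have "H w \<le> (1 - s) * H q + s * H u - (r - rho) / 2 * s * (1 - s) * A"
      using Fw unfolding H_def Nw by (simp add: field_simps)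
    with qmin[OF \<open>w \<in> X\<close>] have "s * (t * ((r - rho) / 2 * A)) \<le> s * (H u - H q)"
      by (simp add: s_def algebra_simps)
    then show ?thesis using s by simp
  qed
  then have "(r - rho) / 2 * A \<le> H u - H q" by (rule field_le_mult_one_interval)
  then show ?thesis by (simp add: H_def A_def)
qed

lemma prox_exists:
  fixes F :: "'a::euclidean_space \<Rightarrow> real"
  assumes X: "closed X" and x0: "x0 \<in> X" and cont: "continuous_on X F"
    and low: "\<And>u. u \<in> X \<Longrightarrow> c - K * norm (u - x0) - rho / 2 * (norm (u - x0))\<^sup>2 \<le> F u"
    and rho: "0 \<le> rho" "rho < r"
  shows "\<exists>q. is_prox F X r x q"
proof -
  define H where "H u = F u + r / 2 * (norm (u - x))\<^sup>2" for u
  define e where "e = norm (x - x0)"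
  define g where "g d = (r - rho) / 2 * d\<^sup>2 - (K + r * e) * d + c" for d
  have quadratic_tends_to_top: "\<forall>\<^sub>F d in at_top. B < a * d\<^sup>2 - b * d + c'" if "0 < a" for a b c' B :: real
    using that by real_asymp
  have "g (dist u x0) \<le> H u" if u: "u \<in> X" for u
  proof -
    define d where "d = norm (u - x0)"
    have "(u - x0) \<bullet> (x - x0) \<le> d * e"
      unfolding d_def e_def by (rule norm_cauchy_schwarz)
    moreover have "(norm (u - x))\<^sup>2 = d\<^sup>2 - 2 * ((u - x0) \<bullet> (x - x0)) + e\<^sup>2"
      using power2_norm_diff[of "u - x0" "x - x0"] by (simp add: d_def e_def)
    ultimately have "d\<^sup>2 - 2 * (d * e) \<le> (norm (u - x))\<^sup>2"
      using zero_le_power2[of e] by linarith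
    then have "r / 2 * (d\<^sup>2 - 2 * (d * e)) \<le> r / 2 * (norm (u - x))\<^sup>2"
      using rho by (intro mult_left_mono) auto
    then show ?thesis
      using low[OF u] by (simp add: g_def H_def d_def dist_norm field_simps)
  qed
  moreover have "\<forall>\<^sub>F d in at_top. H x0 < g d"
    using quadratic_tends_to_top[of "(r - rho) / 2" "H x0" "K + r * e" c] rho unfolding g_def by simp
  moreover have "continuous_on X H"
    unfolding H_def by (intro continuous_intros cont)
  ultimately obtain q where "q \<in> X" "\<And>u. u \<in> X \<Longrightarrow> H q \<le> H u"
    using continuous_on_closed_attains_inf_coercive[OF X x0] by metis
  then show ?thesis unfolding is_prox_def H_def by blast
qed

lemma prox_lipschitz:
  assumes wc: "weakly_convex_on rho X F" and rho: "0 \<le> rho" and r: "rho < r"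
    and p: "is_prox F X r x p" and q: "is_prox F X r y q"
  shows "(r - rho) * norm (q - p) \<le> r * norm (y - x)"
proof -
  have "F p + r / 2 * (norm (p - x))\<^sup>2 + (r - rho) / 2 * (norm (q - p))\<^sup>2 \<le> F q + r / 2 * (norm (q - x))\<^sup>2"
    using prox_quadratic_growth[OF wc r p, of q] q by (simp add: is_prox_def)
  moreover have "F q + r / 2 * (norm (q - y))\<^sup>2 + (r - rho) / 2 * (norm (q - p))\<^sup>2 \<le> F p + r / 2 * (norm (p - y))\<^sup>2"
    using prox_quadratic_growth[OF wc r q, of p] p norm_minus_commute[of p q] by (simp add: is_prox_def)
  moreover have "(norm (q - x))\<^sup>2 - (norm (p - x))\<^sup>2 + (norm (p - y))\<^sup>2 - (norm (q - y))\<^sup>2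
      = 2 * ((q - p) \<bullet> (y - x))"
    by (simp add: power2_norm_eq_inner inner_diff_left inner_diff_right inner_commute)
  then have "r / 2 * ((norm (q - x))\<^sup>2 - (norm (p - x))\<^sup>2 + (norm (p - y))\<^sup>2 - (norm (q - y))\<^sup>2)
      = r * ((q - p) \<bullet> (y - x))"
    by simp
  then have "r / 2 * (norm (q - x))\<^sup>2 - r / 2 * (norm (p - x))\<^sup>2 + r / 2 * (norm (p - y))\<^sup>2 - r / 2 * (norm (q - y))\<^sup>2
      = r * ((q - p) \<bullet> (y - x))"
    by (simp only: right_diff_distrib distrib_left)
  moreover have "(r - rho) * (norm (q - p))\<^sup>2 = 2 * ((r - rho) / 2 * (norm (q - p))\<^sup>2)" by simp
  ultimately have "(r - rho) * (norm (q - p))\<^sup>2 \<le> r * ((q - p) \<bullet> (y - x))"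
    by linarith
  also have "\<dots> \<le> r * (norm (q - p) * norm (y - x))"
    using rho r by (intro mult_left_mono norm_cauchy_schwarz) auto
  finally have "norm (q - p) * ((r - rho) * norm (q - p)) \<le> norm (q - p) * (r * norm (y - x))"
    by (simp add: power2_eq_square algebra_simps)
  then show ?thesis
    using rho r by (cases "q = p") (auto simp: mult_le_cancel_left)
qed

lemma moreau_env_difference_bounds:
  assumes p: "is_prox F X r x p" and q: "is_prox F X r y q"
  defines "\<Delta> \<equiv> moreau_env F X r y - moreau_env F X r x - (y - x) \<bullet> (r *\<^sub>R (x - p))"
  shows "\<Delta> \<le> r / 2 * (norm (y - x))\<^sup>2"
    and "r / 2 * (norm (y - x))\<^sup>2 - r * ((q - p) \<bullet> (y - x)) \<le> \<Delta>"
proof -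
  define h where "h = y - x"
  have expand: "r / 2 * (norm (c - y))\<^sup>2 = r / 2 * (norm (c - x))\<^sup>2 - r * ((c - x) \<bullet> h) + r / 2 * (norm h)\<^sup>2"
    for c
  proof -
    have "c - y = (c - x) - h" by (simp add: h_def)
    then have "r / 2 * (norm (c - y))\<^sup>2 = r / 2 * ((norm (c - x))\<^sup>2 - 2 * ((c - x) \<bullet> h) + (norm h)\<^sup>2)"
      by (simp only: power2_norm_diff)
    then show ?thesis by (simp add: algebra_simps del: inner_diff_left)
  qed
  have Mx: "moreau_env F X r x = F p + r / 2 * (norm (p - x))\<^sup>2"
    and My: "moreau_env F X r y = F q + r / 2 * (norm (q - y))\<^sup>2"
    using moreau_env_eq_prox[OF p] moreau_env_eq_prox[OF q] by simp_all
  have "moreau_env F X r y \<le> F p + r / 2 * (norm (p - y))\<^sup>2"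
    using q p unfolding My is_prox_def by blast
  moreover have "moreau_env F X r x \<le> F q + r / 2 * (norm (q - x))\<^sup>2"
    using p q unfolding Mx is_prox_def by blast
  moreover have "(y - x) \<bullet> (r *\<^sub>R (x - p)) = - (r * ((p - x) \<bullet> h))"
    by (simp add: h_def inner_commute inner_diff_right algebra_simps)
  moreover have "r * ((q - p) \<bullet> h) = r * ((q - x) \<bullet> h) - r * ((p - x) \<bullet> h)"
    by (simp add: inner_diff_left algebra_simps)
  ultimately show "\<Delta> \<le> r / 2 * (norm (y - x))\<^sup>2"
    and "r / 2 * (norm (y - x))\<^sup>2 - r * ((q - p) \<bullet> (y - x)) \<le> \<Delta>"
    using Mx My expand[of p] expand[of q] unfolding \<Delta>_def h_def[symmetric] by linarith+
qed

lemma moreau_env_has_gderiv: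
  assumes wc: "weakly_convex_on rho X F" and rho: "0 \<le> rho" "rho < r"
    and ex: "\<And>y. \<exists>q. is_prox F X r y q" and p: "is_prox F X r x p"
  shows "GDERIV (moreau_env F X r) x :> r *\<^sub>R (x - p)"
proof (rule has_gderiv_of_quadratic_remainder)
  fix y
  obtain q where q: "is_prox F X r y q" using ex by blast
  define h where "h = y - x"
  define C where "C = r\<^sup>2 / (r - rho)"
  have "r * ((q - p) \<bullet> h) \<le> r * (norm (q - p) * norm h)"
    using rho by (intro mult_left_mono norm_cauchy_schwarz) auto
  also have "\<dots> \<le> r * (r / (r - rho) * norm h * norm h)"
  proof -
    have "norm (q - p) \<le> r / (r - rho) * norm h"
      using prox_lipschitz[OF wc rho p q] rho by (simp add: h_def field_simps)
    then show ?thesis using rho by (intro mult_left_mono mult_right_mono) auto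
  qed
  also have "\<dots> = C * (norm h)\<^sup>2"
    by (simp add: C_def power2_eq_square)
  finally have "r * ((q - p) \<bullet> h) \<le> C * (norm h)\<^sup>2" .
  moreover have "r / 2 \<le> C"
    using rho by (simp add: C_def field_simps power2_eq_square)
  then have "r / 2 * (norm h)\<^sup>2 \<le> C * (norm h)\<^sup>2"
    by (intro mult_right_mono) auto
  moreover have "0 \<le> r / 2 * (norm h)\<^sup>2" using rho by simp
  ultimately show "\<bar>moreau_env F X r y - moreau_env F X r x - (y - x) \<bullet> (r *\<^sub>R (x - p))\<bar> \<le> C * (norm (y - x))\<^sup>2"
    using moreau_env_difference_bounds[OF p q] unfolding h_def[symmetric] abs_le_iff
    by (intro conjI; linarith)
qed

lemma moreau_env_gradient_bound:
  assumes wc: "weakly_convex_on lam X F" and lam: "0 < lam"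
    and ex: "\<And>y. \<exists>q. is_prox F X (2 * lam) y q"
    and z: "z \<in> X"
    and approx: "\<And>u. u \<in> X \<Longrightarrow> G z - \<delta> \<le> G u + lam * (norm (u - z))\<^sup>2"
    and diff: "\<And>u. u \<in> X \<Longrightarrow> (F z - G z) - (F u - G u) \<le> L * norm (u - z)"
  shows "\<exists>g. GDERIV (moreau_env F X (2 * lam)) z :> g \<and> (norm g)\<^sup>2 \<le> 8 * lam * \<delta> + 4 * L * norm g"
proof -
  obtain q where q: "is_prox F X (2 * lam) z q" using ex by blast
  have qX: "q \<in> X" using q by (simp add: is_prox_def)
  define s where "s = norm (q - z)"
  have "F q + lam * s\<^sup>2 + lam / 2 * s\<^sup>2 \<le> F z"
    using prox_quadratic_growth[OF wc _ q z] lam by (simp add: s_def norm_minus_commute)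
  moreover have "G z - \<delta> \<le> G q + lam * s\<^sup>2" using approx[OF qX] by (simp add: s_def)
  moreover have "(F z - G z) - (F q - G q) \<le> L * s" using diff[OF qX] by (simp add: s_def)
  ultimately have key: "lam / 2 * s\<^sup>2 \<le> \<delta> + L * s" by linarith
  have g: "norm ((2 * lam) *\<^sub>R (z - q)) = 2 * lam * s"
    using lam by (simp add: s_def norm_minus_commute)
  have "(2 * lam * s)\<^sup>2 = 8 * lam * (lam / 2 * s\<^sup>2)"
    by (simp add: power2_eq_square)
  also have "\<dots> \<le> 8 * lam * (\<delta> + L * s)" using key lam by (intro mult_left_mono) auto
  also have "\<dots> = 8 * lam * \<delta> + 4 * L * (2 * lam * s)"
    by (simp add: algebra_simps)
  finally have "(norm ((2 * lam) *\<^sub>R (z - q)))\<^sup>2 \<le> 8 * lam * \<delta> + 4 * L * norm ((2 * lam) *\<^sub>R (z - q))"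
    unfolding g .
  then show ?thesis
    using moreau_env_has_gderiv[OF wc _ _ ex q] lam by fastforce
qed

lemma power2_norm_gradient_step:
  fixes u x g :: "'a::real_inner"
  assumes "lam \<noteq> 0"
  shows "lam\<^sup>2 * (norm (u - (x - (1 / lam) *\<^sub>R g)))\<^sup>2
    = lam\<^sup>2 * (norm (u - x))\<^sup>2 + 2 * lam * (g \<bullet> (u - x)) + (norm g)\<^sup>2"
proof -
  have "lam *\<^sub>R (u - (x - (1 / lam) *\<^sub>R g)) = lam *\<^sub>R (u - x) + g"
    using assms by (simp add: algebra_simps)
  then have "lam\<^sup>2 * (norm (u - (x - (1 / lam) *\<^sub>R g)))\<^sup>2 = (norm (lam *\<^sub>R (u - x) + g))\<^sup>2"
    by (metis power_mult_distrib norm_scaleR power2_abs)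
  also have "\<dots> = lam\<^sup>2 * (norm (u - x))\<^sup>2 + 2 * lam * (g \<bullet> (u - x)) + (norm g)\<^sup>2"
    by (simp add: power2_norm_add power_mult_distrib inner_commute del: inner_diff_left inner_diff_right)
  finally show ?thesis .
qed

(* By completing the square, - e / (2 lam) is the minimum over X of the model
   g \<bullet> (u - x) + lam / 2 * (norm (u - x))\<^sup>2, attained at x'. *)
lemma projected_gradient_step:
  fixes G :: "'a::euclidean_space \<Rightarrow> real"
  assumes lam: "0 < lam" and X: "closed X" and x: "x \<in> X"
    and up: "\<And>u. u \<in> X \<Longrightarrow> G u \<le> G x + g \<bullet> (u - x) + lam / 2 * (norm (u - x))\<^sup>2"
    and lo: "\<And>u. u \<in> X \<Longrightarrow> G x + g \<bullet> (u - x) - lam / 2 * (norm (u - x))\<^sup>2 \<le> G u"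
    and x': "x' = closest_point X (x - (1 / lam) *\<^sub>R g)"
    and e: "e = (norm g)\<^sup>2 - lam\<^sup>2 * (norm (x - (1 / lam) *\<^sub>R g - x'))\<^sup>2"
  shows "0 \<le> e" and "G x' \<le> G x - e / (2 * lam)"
    and "\<And>u. u \<in> X \<Longrightarrow> G x - e / (2 * lam) \<le> G u + lam * (norm (u - x))\<^sup>2"
proof -
  define xt where "xt = x - (1 / lam) *\<^sub>R g"
  have x'X: "x' \<in> X" unfolding x' using X x by (auto intro: closest_point_in_set)
  have closest: "(norm (xt - x'))\<^sup>2 \<le> (norm (u - xt))\<^sup>2" if "u \<in> X" for u
    using closest_point_le[OF X that, of xt] unfolding x' xt_def
    by (simp add: dist_norm norm_minus_commute power_mono)
  have square: "2 * lam * (g \<bullet> (u - x)) + lam\<^sup>2 * (norm (u - x))\<^sup>2 = lam\<^sup>2 * (norm (u - xt))\<^sup>2 - (norm g)\<^sup>2"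
    for u
    using power2_norm_gradient_step[of lam u x g] lam by (simp add: xt_def)
  have e': "e = (norm g)\<^sup>2 - lam\<^sup>2 * (norm (xt - x'))\<^sup>2" using e by (simp add: xt_def)
  have "lam\<^sup>2 * (norm (xt - x'))\<^sup>2 \<le> lam\<^sup>2 * (norm (x - xt))\<^sup>2"
    using closest[OF x] by (intro mult_left_mono) auto
  then show "0 \<le> e"
    using square[of x] unfolding e' by simp
  have "G x' \<le> G x + g \<bullet> (x' - x) + lam / 2 * (norm (x' - x))\<^sup>2"
    by (rule up[OF x'X])
  also have "\<dots> = G x + (2 * lam * (g \<bullet> (x' - x)) + lam\<^sup>2 * (norm (x' - x))\<^sup>2) / (2 * lam)"
    using lam by (simp add: field_simps power2_eq_square)
  also have "\<dots> = G x - e / (2 * lam)"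
    unfolding square e' by (simp add: norm_minus_commute diff_divide_distrib)
  finally show "G x' \<le> G x - e / (2 * lam)" .
  fix u assume u: "u \<in> X"
  have "G x - e / (2 * lam) = G x + (lam\<^sup>2 * (norm (xt - x'))\<^sup>2 - (norm g)\<^sup>2) / (2 * lam)"
    unfolding e' by (simp add: diff_divide_distrib)
  also have "\<dots> \<le> G x + (lam\<^sup>2 * (norm (u - xt))\<^sup>2 - (norm g)\<^sup>2) / (2 * lam)"
    using closest[OF u] lam by (simp add: divide_right_mono mult_left_mono)
  also have "\<dots> = G x + g \<bullet> (u - x) + lam / 2 * (norm (u - x))\<^sup>2"
    unfolding square[symmetric] using lam by (simp add: field_simps power2_eq_square)
  also have "\<dots> \<le> G u + lam * (norm (u - x))\<^sup>2"
    using lo[OF u] by simp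
  finally show "G x - e / (2 * lam) \<le> G u + lam * (norm (u - x))\<^sup>2" .
qed

(* sqrt is strictly increasing on all of the reals (sqrt (- a) = - sqrt a), so the iterate with
   the least eps_t is also the one with the least eps_t squared, whatever the signs. *)
lemma alg1_output_argmin:
  assumes "0 < n"
  shows "\<exists>t<n. alg1_output gx X gam x0 yh n = alg1_x gx X gam x0 yh t \<and>
           (\<forall>s<n. alg1_eps_sq gx X gam x0 yh t \<le> alg1_eps_sq gx X gam x0 yh s)"
proof -
  let ?e = "alg1_eps_sq gx X gam x0 yh"
  have "\<exists>t<n. alg1_state gx X gam x0 yh n = (alg1_x gx X gam x0 yh t, ereal (sqrt (?e t)))
          \<and> (\<forall>s<n. ?e t \<le> ?e s)"
    using assms
  proof (induction n)
    case (Suc n)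
    show ?case
    proof (cases "n = 0")
      case False
      then obtain t where t: "t < n" and st: "alg1_state gx X gam x0 yh n = (alg1_x gx X gam x0 yh t, ereal (sqrt (?e t)))"
        and best: "\<forall>s<n. ?e t \<le> ?e s"
        using Suc by auto
      show ?thesis
      proof (cases "?e n < ?e t")
        case True
        then have "alg1_state gx X gam x0 yh (Suc n) = (alg1_x gx X gam x0 yh n, ereal (sqrt (?e n)))"
          using st by simp
        moreover have "\<forall>s<Suc n. ?e n \<le> ?e s" using best True by (auto simp: less_Suc_eq)
        ultimately show ?thesis using lessI by blast
      next
        case False
        then have "alg1_state gx X gam x0 yh (Suc n) = (alg1_x gx X gam x0 yh t, ereal (sqrt (?e t)))"
          using st by simp
        moreover have "\<forall>s<Suc n. ?e t \<le> ?e s" using best False by (auto simp: less_Suc_eq)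
        ultimately show ?thesis using less_SucI[OF t] by blast
      qed
    next
      case True
      then show ?thesis by (intro exI[of _ 0]) simp
    qed
  qed simp
  then show ?thesis by (auto simp: alg1_output_def)
qed

lemma le_of_power2_le_affine:
  fixes n A B c :: real
  assumes n: "n\<^sup>2 \<le> A + B * n" and A: "0 \<le> A" and Bc: "A + B * c \<le> c\<^sup>2" and c: "0 < c"
  shows "n \<le> c"
proof (rule ccontr)
  assume "\<not> n \<le> c"
  then have cn: "c < n" by simp
  have "B * c \<le> c * c" using A Bc by (simp add: power2_eq_square)
  then have "0 \<le> c - B" using c by (simp add: mult.commute)
  then have "c * (c - B) < n * (n - B)" using cn c by (intro mult_strict_mono) auto
  then show False using n Bc by (simp add: power2_eq_square algebra_simps)
qed

(* The hypothesis delta <= Delta covers T = 0, where the budget forces Delta <= 0. *)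
lemma mult_le_of_iteration_budget:
  fixes T :: nat
  assumes "0 \<le> \<delta>" "\<delta> \<le> \<Delta>" "real T * \<delta> \<le> \<Delta>" "c * \<Delta> / e \<le> real T" "0 < e" "0 \<le> c"
  shows "c * \<delta> \<le> e"
proof (cases "T = 0")
  case True
  then have "c * \<Delta> \<le> 0" using assms(4,5) by (simp add: divide_le_0_iff)
  moreover have "c * \<delta> \<le> c * \<Delta>" using assms(2,6) by (rule mult_left_mono)
  ultimately show ?thesis using assms(5) by linarith
next
  case False
  have "c * (real T * \<delta>) \<le> c * \<Delta>" using assms(3,6) by (rule mult_left_mono)
  then have "real T * (c * \<delta>) \<le> c * \<Delta>" by (simp add: mult.left_commute)
  also have "\<dots> \<le> real T * e" using assms(4,5) by (simp add: divide_le_eq mult.commute)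
  finally show ?thesis using False by simp
qed

locale minimax_lipschitz_gradient =
  fixes f :: "'a::euclidean_space \<Rightarrow> 'b::euclidean_space \<Rightarrow> real"
    and gx :: "'a \<Rightarrow> 'b \<Rightarrow> 'a"
    and X :: "'a set" and Y :: "'b set" and lam mu :: real
  assumes convex_X: "convex X" and closed_X: "closed X" and compact_Y: "compact Y"
    and grad: "\<And>x y. x \<in> X \<Longrightarrow> y \<in> Y \<Longrightarrow> ((\<lambda>u. f u y) has_derivative (\<lambda>h. gx x y \<bullet> h)) (at x within X)"
    and lip: "\<And>x x' y y'. x \<in> X \<Longrightarrow> x' \<in> X \<Longrightarrow> y \<in> Y \<Longrightarrow> y' \<in> Y \<Longrightarrow>
      norm (gx x' y' - gx x y) \<le> lam * norm (x' - x) + mu * norm (y' - y)"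
    and lam_pos: "0 < lam" and mu_nonneg: "0 \<le> mu"
    and max_attained: "\<And>x. x \<in> X \<Longrightarrow> \<exists>y\<in>Y. \<forall>y'\<in>Y. f x y' \<le> f x y"
begin

definition phi :: "'a \<Rightarrow> real" where
  "phi x = (SUP y\<in>Y. f x y)"

lemma slice_quadratic_bounds:
  assumes "y \<in> Y" "z \<in> X" "u \<in> X"
  shows "\<bar>f u y - f z y - gx z y \<bullet> (u - z)\<bar> \<le> lam / 2 * (norm (u - z))\<^sup>2"
  using assms lip[of _ _ y y]
  by (intro quadratic_bounds_of_lipschitz_gradient[OF convex_X _ _ grad]) auto

lemma slice_weakly_convex:
  assumes "y \<in> Y"
  shows "weakly_convex_on lam X (\<lambda>x. f x y)"
proof (rule weakly_convex_on_lower_quadratic_model[OF convex_X, where dG = "\<lambda>z. gx z y"])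
  fix z u assume "z \<in> X" "u \<in> X"
  from slice_quadratic_bounds[OF assms this]
  show "f z y + gx z y \<bullet> (u - z) - lam / 2 * (norm (u - z))\<^sup>2 \<le> f u y"
    unfolding abs_le_iff by linarith
qed

lemma slice_continuous:
  assumes "y \<in> Y"
  shows "continuous_on X (\<lambda>x. f x y)"
  using grad[OF _ assms] by (rule has_derivative_continuous_on)

lemma slice_lower_bound:
  assumes "y \<in> Y" "x0 \<in> X" "u \<in> X"
  shows "f x0 y - norm (gx x0 y) * norm (u - x0) - lam / 2 * (norm (u - x0))\<^sup>2 \<le> f u y"
proof -
  have "- (f u y - f x0 y - gx x0 y \<bullet> (u - x0)) \<le> lam / 2 * (norm (u - x0))\<^sup>2"
    using slice_quadratic_bounds[OF assms] by (rule abs_le_D2)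
  moreover have "\<bar>gx x0 y \<bullet> (u - x0)\<bar> \<le> norm (gx x0 y) * norm (u - x0)"
    by (rule Cauchy_Schwarz_ineq2)
  ultimately show ?thesis by linarith
qed

lemma phi_attained:
  assumes "x \<in> X"
  obtains y where "y \<in> Y" "phi x = f x y" "\<And>y'. y' \<in> Y \<Longrightarrow> f x y' \<le> f x y"
proof -
  obtain y where y: "y \<in> Y" and max: "\<And>y'. y' \<in> Y \<Longrightarrow> f x y' \<le> f x y"
    using max_attained[OF assms] by blast
  then have "phi x = f x y" unfolding phi_def by (intro cSup_eq_maximum) auto
  then show ?thesis using that y max by blast
qed

lemma phi_ge:
  assumes "x \<in> X" "y \<in> Y"
  shows "f x y \<le> phi x"
proof -
  obtain y' where "phi x = f x y'" "\<And>y''. y'' \<in> Y \<Longrightarrow> f x y'' \<le> f x y'"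
    using phi_attained[OF assms(1)] by blast
  then show ?thesis using assms(2) by simp
qed

lemma phi_weakly_convex: "weakly_convex_on lam X phi"
  unfolding phi_def[abs_def]
  by (rule weakly_convex_on_SUP[OF convex_X slice_weakly_convex max_attained])

lemma phi_minus_slice_le:
  assumes yh: "yh \<in> Y" and u: "u \<in> X" and v: "v \<in> X"
  shows "(phi u - f u yh) - (phi v - f v yh) \<le> mu * diameter Y * norm (u - v)"
proof -
  obtain y where y: "y \<in> Y" and phi_u: "phi u = f u y" using phi_attained[OF u] by blast
  have "norm (y - yh) \<le> diameter Y"
    using diameter_bounded_bound[OF compact_imp_bounded[OF compact_Y] y yh] by (simp add: dist_norm)
  then have grad_diff: "norm (gx w y - gx w yh) \<le> mu * diameter Y" if "w \<in> X" for w
    using lip[OF that that yh y] mu_nonneg by (simp add: mult_left_mono order_trans)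
  have "onorm (\<lambda>h. (gx w y - gx w yh) \<bullet> h) \<le> mu * diameter Y" if w: "w \<in> X" for w
  proof (rule onorm_le)
    fix h
    have "norm ((gx w y - gx w yh) \<bullet> h) \<le> norm (gx w y - gx w yh) * norm h"
      by (simp add: Cauchy_Schwarz_ineq2)
    also have "\<dots> \<le> mu * diameter Y * norm h"
      using grad_diff[OF w] by (rule mult_right_mono) simp
    finally show "norm ((gx w y - gx w yh) \<bullet> h) \<le> mu * diameter Y * norm h" .
  qed
  moreover have "((\<lambda>w. f w y - f w yh) has_derivative (\<lambda>h. (gx w y - gx w yh) \<bullet> h)) (at w within X)"
    if "w \<in> X" for w
    using has_derivative_diff[OF grad[OF that y] grad[OF that yh]] by (simp add: inner_diff_left)
  ultimately have "norm ((f u y - f u yh) - (f v y - f v yh)) \<le> mu * diameter Y * norm (u - v)"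
    by (intro differentiable_bound[OF convex_X _ _ u v])
  then show ?thesis using phi_u phi_ge[OF v y] by simp
qed

lemma phi_continuous: "continuous_on X phi"
proof (cases "X = {}")
  case False
  then obtain yh where yh: "yh \<in> Y" using max_attained by blast
  have "lipschitz_on (mu * diameter Y) X (\<lambda>u. phi u - f u yh)"
    unfolding lipschitz_on_def
  proof (intro conjI ballI)
    show "0 \<le> mu * diameter Y"
      using mu_nonneg diameter_ge_0[OF compact_imp_bounded[OF compact_Y]] by simp
    fix u v assume "u \<in> X" "v \<in> X"
    then show "dist (phi u - f u yh) (phi v - f v yh) \<le> mu * diameter Y * dist u v"
      using phi_minus_slice_le[OF yh, of u v] phi_minus_slice_le[OF yh, of v u]
      by (simp add: dist_real_def dist_norm abs_le_iff norm_minus_commute)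
  qed
  then have "continuous_on X (\<lambda>u. f u yh + (phi u - f u yh))"
    by (intro continuous_intros slice_continuous[OF yh] lipschitz_on_continuous_on)
  then show ?thesis by simp
qed simp

lemma slice_prox_exists:
  assumes "x0 \<in> X" "yh \<in> Y"
  shows "\<exists>q. is_prox (\<lambda>x. f x yh) X (2 * lam) x q"
  using slice_lower_bound[OF assms(2,1)] lam_pos
  by (intro prox_exists[OF closed_X assms(1) slice_continuous[OF assms(2)]]) auto

lemma phi_prox_exists:
  assumes "x0 \<in> X" "yh \<in> Y"
  shows "\<exists>q. is_prox phi X (2 * lam) x q"
proof (rule prox_exists[OF closed_X assms(1) phi_continuous])
  fix u assume "u \<in> X"
  then show "f x0 yh - norm (gx x0 yh) * norm (u - x0) - lam / 2 * (norm (u - x0))\<^sup>2 \<le> phi u"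
    using slice_lower_bound[OF assms(2,1)] phi_ge[OF _ assms(2)] by (blast intro: order_trans)
qed (use lam_pos in auto)

lemma alg1_x_in_X: "x0 \<in> X \<Longrightarrow> alg1_x gx X (1 / lam) x0 yh t \<in> X"
  by (induction t) (auto intro: closest_point_in_set[OF closed_X])

lemma alg1_step:
  assumes x0: "x0 \<in> X" and yh: "yh \<in> Y"
  defines "x \<equiv> alg1_x gx X (1 / lam) x0 yh" and "e \<equiv> alg1_eps_sq gx X (1 / lam) x0 yh"
  shows "0 \<le> e t" and "f (x (Suc t)) yh \<le> f (x t) yh - e t / (2 * lam)"
    and "\<And>u. u \<in> X \<Longrightarrow> f (x t) yh - e t / (2 * lam) \<le> f u yh + lam * (norm (u - x t))\<^sup>2"
proof -
  have xt: "x t \<in> X" unfolding x_def by (rule alg1_x_in_X[OF x0])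
  note bounds = slice_quadratic_bounds[OF yh xt]
  note step = projected_gradient_step[OF lam_pos closed_X xt, where G = "\<lambda>u. f u yh" and g = "gx (x t) yh"]
  have "x (Suc t) = closest_point X (x t - (1 / lam) *\<^sub>R gx (x t) yh)" by (simp add: x_def)
  moreover have "e t = (norm (gx (x t) yh))\<^sup>2 - lam\<^sup>2 * (norm (x t - (1 / lam) *\<^sub>R gx (x t) yh - x (Suc t)))\<^sup>2"
    by (simp add: e_def x_def alg1_eps_sq_def alg1_xt_def power_one_over)
  moreover have "f u yh \<le> f (x t) yh + gx (x t) yh \<bullet> (u - x t) + lam / 2 * (norm (u - x t))\<^sup>2"
    and "f (x t) yh + gx (x t) yh \<bullet> (u - x t) - lam / 2 * (norm (u - x t))\<^sup>2 \<le> f u yh"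
    if "u \<in> X" for u
    using bounds[OF that] unfolding abs_le_iff by linarith+
  ultimately show "0 \<le> e t" and "f (x (Suc t)) yh \<le> f (x t) yh - e t / (2 * lam)"
    and "\<And>u. u \<in> X \<Longrightarrow> f (x t) yh - e t / (2 * lam) \<le> f u yh + lam * (norm (u - x t))\<^sup>2"
    using step by blast+
qed

lemma alg1_descent_sum:
  assumes x0: "x0 \<in> X" and yh: "yh \<in> Y"
  shows "(\<Sum>s<n. alg1_eps_sq gx X (1 / lam) x0 yh s) \<le> 2 * lam * (f x0 yh - f (alg1_x gx X (1 / lam) x0 yh n) yh)"
proof (induction n)
  case (Suc n)
  have "alg1_eps_sq gx X (1 / lam) x0 yh n
      \<le> 2 * lam * (f (alg1_x gx X (1 / lam) x0 yh n) yh - f (alg1_x gx X (1 / lam) x0 yh (Suc n)) yh)"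
    using alg1_step(2)[OF x0 yh, of n] lam_pos by (simp add: field_simps)
  with Suc show ?case by (simp add: algebra_simps)
qed simp

lemma alg1_output_approx_stationary:
  fixes T :: nat
  assumes x0: "x0 \<in> X" and yh: "yh \<in> Y" and lower: "\<And>u. u \<in> X \<Longrightarrow> m \<le> f u yh"
  defines "z \<equiv> alg1_output gx X (1 / lam) x0 yh T"
  obtains \<delta> where "z \<in> X" "0 \<le> \<delta>" "\<delta> \<le> f x0 yh - m" "real T * \<delta> \<le> f x0 yh - m"
    and "\<And>u. u \<in> X \<Longrightarrow> f z yh - \<delta> \<le> f u yh + lam * (norm (u - z))\<^sup>2"
proof (cases "T = 0")
  case True
  then have "z = x0" by (simp add: z_def alg1_output_def)
  moreover have "f x0 yh - (f x0 yh - m) \<le> f u yh + lam * (norm (u - x0))\<^sup>2" if "u \<in> X" for u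
    using lower[OF that] lam_pos by (simp add: add_increasing2)
  ultimately show ?thesis
    using that[of "f x0 yh - m"] x0 lower[OF x0] True by simp
next
  case False
  let ?x = "alg1_x gx X (1 / lam) x0 yh" and ?e = "alg1_eps_sq gx X (1 / lam) x0 yh"
  from False have "0 < T" by simp
  then obtain t where t: "t < T" and z: "z = ?x t" and best: "\<And>s. s < T \<Longrightarrow> ?e t \<le> ?e s"
    using alg1_output_argmin[of T gx X "1 / lam" x0 yh] unfolding z_def by auto
  have "real T * ?e t = (\<Sum>s<T. ?e t)" by simp
  also have "\<dots> \<le> (\<Sum>s<T. ?e s)"
    using best by (intro sum_mono) simp
  also have "\<dots> \<le> 2 * lam * (f x0 yh - f (?x T) yh)" by (rule alg1_descent_sum[OF x0 yh])
  also have "\<dots> \<le> 2 * lam * (f x0 yh - m)"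
    using lower[OF alg1_x_in_X[OF x0]] lam_pos by simp
  finally have T\<delta>: "real T * (?e t / (2 * lam)) \<le> f x0 yh - m"
    using lam_pos by (simp add: field_simps)
  have \<delta>0: "0 \<le> ?e t / (2 * lam)" using alg1_step(1)[OF x0 yh] lam_pos by simp
  then have "1 * (?e t / (2 * lam)) \<le> real T * (?e t / (2 * lam))"
    using \<open>0 < T\<close> by (intro mult_right_mono) auto
  then show ?thesis
    using that[OF _ \<delta>0 _ T\<delta>] T\<delta> alg1_step(3)[OF x0 yh, where t = t] alg1_x_in_X[OF x0] unfolding z by simp
qed

lemma moreau_env_gradient_norms:
  assumes x0: "x0 \<in> X" and yh: "yh \<in> Y" and z: "z \<in> X"
    and approx: "\<And>u. u \<in> X \<Longrightarrow> f z yh - \<delta> \<le> f u yh + lam * (norm (u - z))\<^sup>2"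
    and \<delta>: "0 \<le> \<delta>" "300 * lam * \<delta> \<le> eps\<^sup>2" and eps: "0 < eps"
  shows "\<exists>g. GDERIV (moreau_env (\<lambda>x. f x yh) X (2 * lam)) z :> g \<and> norm g \<le> eps / 6"
    and "24 * mu * diameter Y \<le> eps \<Longrightarrow> \<exists>g. GDERIV (moreau_env phi X (2 * lam)) z :> g \<and> norm g \<le> eps"
proof -
  from mult_left_mono[OF \<delta>(2), of "8 / 300"]
  have \<delta>_eps: "8 * lam * \<delta> \<le> 8 / 300 * eps\<^sup>2" by simp
  have \<delta>_nonneg: "0 \<le> 8 * lam * \<delta>" using \<delta> lam_pos by simp
  obtain g where g: "GDERIV (moreau_env (\<lambda>x. f x yh) X (2 * lam)) z :> g"
    and g_bound: "(norm g)\<^sup>2 \<le> 8 * lam * \<delta> + 0 * norm g"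
    using moreau_env_gradient_bound[OF slice_weakly_convex[OF yh] lam_pos slice_prox_exists[OF x0 yh] z approx,
        where L = 0]
    by auto
  have "(eps / 6)\<^sup>2 = eps\<^sup>2 / 36" by (simp add: power_divide)
  then have "8 * lam * \<delta> + 0 * (eps / 6) \<le> (eps / 6)\<^sup>2"
    using \<delta>_eps zero_le_power2[of eps] by linarith
  from le_of_power2_le_affine[OF g_bound \<delta>_nonneg this] eps have "norm g \<le> eps / 6" by simp
  then show "\<exists>g. GDERIV (moreau_env (\<lambda>x. f x yh) X (2 * lam)) z :> g \<and> norm g \<le> eps / 6"
    using g by blast
  show "\<exists>g. GDERIV (moreau_env phi X (2 * lam)) z :> g \<and> norm g \<le> eps"
    if muD: "24 * mu * diameter Y \<le> eps"
  proof -
    have "(phi z - f z yh) - (phi u - f u yh) \<le> mu * diameter Y * norm (u - z)" if "u \<in> X" for u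
      using phi_minus_slice_le[OF yh z that] by (simp add: norm_minus_commute)
    then obtain g where g: "GDERIV (moreau_env phi X (2 * lam)) z :> g"
      and g_bound: "(norm g)\<^sup>2 \<le> 8 * lam * \<delta> + 4 * (mu * diameter Y) * norm g"
      using moreau_env_gradient_bound[OF phi_weakly_convex lam_pos phi_prox_exists[OF x0 yh] z approx] by blast
    have "4 * (mu * diameter Y) * eps \<le> eps / 6 * eps" using muD eps by (intro mult_right_mono) auto
    also have "\<dots> = eps\<^sup>2 / 6" by (simp add: power2_eq_square)
    finally have "8 * lam * \<delta> + 4 * (mu * diameter Y) * eps \<le> eps\<^sup>2"
      using \<delta>_eps zero_le_power2[of eps] by linarith
    from le_of_power2_le_affine[OF g_bound \<delta>_nonneg this eps] have "norm g \<le> eps" .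
    then show ?thesis using g by blast
  qed
qed

end

theorem theorem2:
  fixes f :: "'a::euclidean_space \<Rightarrow> 'b::euclidean_space \<Rightarrow> real"
    and gx :: "'a \<Rightarrow> 'b \<Rightarrow> 'a"
    and X :: "'a set" and Y :: "'b set"
    and lam mu D eps :: real and x0 :: 'a and yh :: 'b and T :: nat
  assumes X: "convex X" "closed X" "interior X \<noteq> {}"
    and Y: "convex Y" "compact Y" "interior Y \<noteq> {}"
    and D: "diameter Y \<le> D"
    and grad: "\<And>x y. x \<in> X \<Longrightarrow> y \<in> Y \<Longrightarrow>
                 ((\<lambda>u. f u y) has_derivative (\<lambda>h. gx x y \<bullet> h)) (at x within X)"
    and lip: "\<And>x x' y y'. x \<in> X \<Longrightarrow> x' \<in> X \<Longrightarrow> y \<in> Y \<Longrightarrow> y' \<in> Y \<Longrightarrow>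
                 norm (gx x' y' - gx x y) \<le> lam * norm (x' - x) + mu * norm (y' - y)"
    and lam: "lam > 0" and mu: "mu \<ge> 0"
    and max_ex: "\<And>x. x \<in> X \<Longrightarrow> \<exists>y\<in>Y. \<forall>y'\<in>Y. f x y' \<le> f x y"
    and min_ex: "\<exists>x\<in>X. \<forall>x'\<in>X. f x yh \<le> f x' yh"
    and x0: "x0 \<in> X" and yh: "yh \<in> Y"
    and eps: "eps > 0"
    and T: "real T \<ge> 300 * lam * ((SUP y\<in>Y. f x0 y) - (INF x\<in>X. f x yh)) / eps\<^sup>2"
  shows "(\<exists>g. GDERIV (moreau_env (\<lambda>x. f x yh) X (2 * lam)) (alg1_output gx X (1 / lam) x0 yh T) :> g
              \<and> norm g \<le> eps / 6)
       \<and> (24 * mu * D \<le> eps \<longrightarrow>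
           (\<exists>g. GDERIV (moreau_env (\<lambda>x. SUP y\<in>Y. f x y) X (2 * lam)) (alg1_output gx X (1 / lam) x0 yh T) :> g
              \<and> norm g \<le> eps))"
proof -
  interpret minimax_lipschitz_gradient f gx X Y lam mu
    using X Y grad lip lam mu max_ex by unfold_locales auto
  obtain xm where xm: "xm \<in> X" and xm_min: "\<And>x. x \<in> X \<Longrightarrow> f xm yh \<le> f x yh"
    using min_ex by blast
  have psi: "(INF x\<in>X. f x yh) = f xm yh"
    using xm xm_min by (intro cInf_eq_minimum) auto
  have "300 * lam * (f x0 yh - f xm yh) / eps\<^sup>2 \<le> 300 * lam * (phi x0 - f xm yh) / eps\<^sup>2"
    using phi_ge[OF x0 yh] lam by (intro divide_right_mono mult_left_mono) auto
  also have "\<dots> \<le> real T"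
    using T by (simp add: phi_def psi)
  finally have budget: "300 * lam * (f x0 yh - f xm yh) / eps\<^sup>2 \<le> real T" .
  define z where "z = alg1_output gx X (1 / lam) x0 yh T"
  obtain \<delta> where z: "z \<in> X" and \<delta>: "0 \<le> \<delta>" "\<delta> \<le> f x0 yh - f xm yh" "real T * \<delta> \<le> f x0 yh - f xm yh"
    and approx: "\<And>u. u \<in> X \<Longrightarrow> f z yh - \<delta> \<le> f u yh + lam * (norm (u - z))\<^sup>2"
    using alg1_output_approx_stationary[OF x0 yh xm_min] unfolding z_def by blast
  have "300 * lam * \<delta> \<le> eps\<^sup>2"
    using mult_le_of_iteration_budget[OF \<delta> budget] eps lam by simp
  note norms = moreau_env_gradient_norms[OF x0 yh z approx \<delta>(1) this eps]
  have "24 * mu * diameter Y \<le> eps" if "24 * mu * D \<le> eps"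
    using mult_left_mono[OF D, of "24 * mu"] mu that by simp
  moreover have "phi = (\<lambda>x. SUP y\<in>Y. f x y)" by (simp add: fun_eq_iff phi_def)
  ultimately show ?thesis using norms unfolding z_def[symmetric] by metis
qed

end
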